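(* Let $G$ be a finitely generated group containing a finite index characteristic subgroup $H$, and let $\{s_i\}_{i=1}^{[G:H]}$ be representatives of the right cosets of $H$ (so $G=\bigcup_iHs_i$). Fix $\varphi\in\mathrm{Aut}(G)$ and $x\in G$, let $\bar\varphi$ be the automorphism of $H$ induced by $\varphi$, and let $f_{x,i}\in\mathrm{Aut}(H)$ be conjugation by $x_i=s_i\,x\,\varphi(s_i)^{-1}$. Then $$[x]_\varphi=\bigcup_{i=1}^{[G:H]}[1_H]_{f_{x,i}\circ\bar\varphi}\cdot x_i,$$ where $[1_H]_{f_{x,i}\circ\bar\varphi}=\{z\,(f_{x,i}(\bar\varphi(z)))^{-1}:z\in H\}$.
   Context: For $\psi\in\mathrm{Aut}(G)$, the $\psi$-twisted conjugacy class of $x$ is $[x]_\psi=\{z\,x\,\psi(z)^{-1}:z\in G\}$. *)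

theory Defs
  imports "HOL-Algebra.Algebra"
begin

definition twisted_class :: "('a, 'b) monoid_scheme \<Rightarrow> ('a \<Rightarrow> 'a) \<Rightarrow> 'a \<Rightarrow> 'a set" where
  "twisted_class G \<psi> x = {z \<otimes>\<^bsub>G\<^esub> x \<otimes>\<^bsub>G\<^esub> inv\<^bsub>G\<^esub> (\<psi> z) | z. z \<in> carrier G}"

definition finitely_generated_group :: "('a, 'b) monoid_scheme \<Rightarrow> bool" where
  "finitely_generated_group G \<longleftrightarrow>
     (\<exists>S. finite S \<and> S \<subseteq> carrier G \<and> generate G S = carrier G)"

definition characteristic_subgroup :: "'a set \<Rightarrow> ('a, 'b) monoid_scheme \<Rightarrow> bool" where
  "characteristic_subgroup H G \<longleftrightarrow>
     subgroup H G \<and> (\<forall>\<psi> \<in> iso G G. \<psi> ` H = H)"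

end

theory Submission
  imports Defs
begin

text \<open>Each summand is the image of one right coset \<open>H s\<^sub>i\<close> under \<open>g \<mapsto> g x \<phi>(g)\<inverse>\<close>: writing
  \<open>g = z s\<^sub>i\<close> with \<open>z \<in> H\<close> gives \<open>g x \<phi>(g)\<inverse> = z x\<^sub>i \<phi>(z)\<inverse> = z (x\<^sub>i \<phi>(z) x\<^sub>i\<inverse>)\<inverse> x\<^sub>i\<close>,
  and the inner conjugate lies in \<open>H\<close> because \<open>H\<close> is characteristic, hence normal and
  \<open>\<phi>\<close>-invariant. Since the cosets cover \<open>G\<close>, the union over \<open>i\<close> is all of \<open>[x]\<^sub>\<phi>\<close>.
  Neither finite generation of \<open>G\<close> nor finiteness of the index is needed.\<close>

lemma (in group) conjugation_in_iso:
  assumes "g \<in> carrier G"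
  shows "(\<lambda>z. g \<otimes> z \<otimes> inv g) \<in> iso G G"
proof -
  have "(\<lambda>z. g \<otimes> z \<otimes> inv g) \<in> hom G G"
    using assms by (intro homI) (auto simp: m_assoc, simp add: m_assoc[symmetric])
  moreover have "bij_betw (\<lambda>z. g \<otimes> z \<otimes> inv g) (carrier G) (carrier G)"
    using conjugation_is_bij[OF assms] by (simp add: bij_betw_def inj_on_def image_def)
  ultimately show ?thesis by (simp add: iso_def)
qed

lemma (in group) characteristic_subgroup_imp_normal:
  assumes "characteristic_subgroup H G"
  shows "H \<lhd> G"
  using assms conjugation_in_iso
  unfolding characteristic_subgroup_def normal_inv_iff by blast

lemma (in group) twisted_class_eq_Union_cover:
  assumes "(\<Union>i\<in>I. C i) = carrier G"
  shows "twisted_class G \<phi> x = (\<Union>i\<in>I. {g \<otimes> x \<otimes> inv (\<phi> g) | g. g \<in> C i})"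
  using assms unfolding twisted_class_def by blast

lemma (in normal) twisted_class_coset_eq:
  assumes \<phi>: "\<phi> \<in> hom G G" "\<phi> ` H \<subseteq> H"
    and s: "s \<in> carrier G" and x: "x \<in> carrier G"
    and xi: "xi = s \<otimes> x \<otimes> inv (\<phi> s)"
  shows "twisted_class (G\<lparr>carrier := H\<rparr>) (\<lambda>z. xi \<otimes> \<phi> z \<otimes> inv xi) \<one> #> xi
    = {g \<otimes> x \<otimes> inv (\<phi> g) | g. g \<in> H #> s}"
proof -
  have \<phi>_closed: "\<phi> g \<in> carrier G" if "g \<in> carrier G" for g
    using \<phi>(1) that by (simp add: hom_in_carrier)
  have xi_closed: "xi \<in> carrier G" using s x xi \<phi>_closed by simp
  have "z \<otimes>\<^bsub>G\<lparr>carrier := H\<rparr>\<^esub> \<one> \<otimes>\<^bsub>G\<lparr>carrier := H\<rparr>\<^esub>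
          inv\<^bsub>G\<lparr>carrier := H\<rparr>\<^esub> (xi \<otimes> \<phi> z \<otimes> inv xi) \<otimes> xi
        = (z \<otimes> s) \<otimes> x \<otimes> inv (\<phi> (z \<otimes> s))" if z: "z \<in> H" for z
  proof -
    have zG: "z \<in> carrier G" using z subset by blast
    have "xi \<otimes> \<phi> z \<otimes> inv xi \<in> H"
      using inv_op_closed2 xi_closed \<phi>(2) z by blast
    then have "z \<otimes>\<^bsub>G\<lparr>carrier := H\<rparr>\<^esub> \<one> \<otimes>\<^bsub>G\<lparr>carrier := H\<rparr>\<^esub>
          inv\<^bsub>G\<lparr>carrier := H\<rparr>\<^esub> (xi \<otimes> \<phi> z \<otimes> inv xi) \<otimes> xi
        = z \<otimes> inv (xi \<otimes> \<phi> z \<otimes> inv xi) \<otimes> xi"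
      using m_inv_consistent[OF subgroup_axioms] zG by simp
    also have "\<dots> = z \<otimes> xi \<otimes> inv (\<phi> z)"
      using zG xi_closed \<phi>_closed by (simp add: inv_mult_group m_assoc)
    also have "\<dots> = (z \<otimes> s) \<otimes> x \<otimes> inv (\<phi> (z \<otimes> s))"
      using zG s x \<phi>_closed hom_mult[OF \<phi>(1)]
      by (simp add: xi inv_mult_group m_assoc)
    finally show ?thesis .
  qed
  then show ?thesis
    unfolding twisted_class_def r_coset_def by auto
qed

theorem mainTheorem17:
  fixes G :: "('a, 'b) monoid_scheme" and H :: "'a set"
    and s :: "nat \<Rightarrow> 'a" and \<phi> :: "'a \<Rightarrow> 'a" and x :: 'a
  assumes "group G"
    and "finitely_generated_group G"
    and "characteristic_subgroup H G"
    and "finite (rcosets\<^bsub>G\<^esub> H)"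
    and "\<forall>i \<in> {1..card (rcosets\<^bsub>G\<^esub> H)}. s i \<in> carrier G"
    and "bij_betw (\<lambda>i. H #>\<^bsub>G\<^esub> s i) {1..card (rcosets\<^bsub>G\<^esub> H)} (rcosets\<^bsub>G\<^esub> H)"
    and "\<phi> \<in> iso G G"
    and "x \<in> carrier G"
  shows "twisted_class G \<phi> x =
    (\<Union>i \<in> {1..card (rcosets\<^bsub>G\<^esub> H)}.
       (let xi = s i \<otimes>\<^bsub>G\<^esub> x \<otimes>\<^bsub>G\<^esub> inv\<^bsub>G\<^esub> (\<phi> (s i)) in
        twisted_class (G\<lparr>carrier := H\<rparr>) (\<lambda>z. xi \<otimes>\<^bsub>G\<^esub> \<phi> z \<otimes>\<^bsub>G\<^esub> inv\<^bsub>G\<^esub> xi) \<one>\<^bsub>G\<^esub>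
          #>\<^bsub>G\<^esub> xi))"
proof -
  interpret group G by fact
  let ?I = "{1..card (rcosets\<^bsub>G\<^esub> H)}"
  interpret normal H G
    using assms(3) by (rule characteristic_subgroup_imp_normal)
  have \<phi>_hom: "\<phi> \<in> hom G G" and \<phi>_H: "\<phi> ` H = H"
    using assms(3,7) by (auto simp: characteristic_subgroup_def iso_def)
  have "(\<Union>i\<in>?I. H #>\<^bsub>G\<^esub> s i) = carrier G"
    using assms(6) rcosets_part_G[OF subgroup_axioms] by (simp add: bij_betw_def)
  then have "twisted_class G \<phi> x
      = (\<Union>i\<in>?I. {g \<otimes>\<^bsub>G\<^esub> x \<otimes>\<^bsub>G\<^esub> inv\<^bsub>G\<^esub> (\<phi> g) | g. g \<in> H #>\<^bsub>G\<^esub> s i})"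
    by (rule twisted_class_eq_Union_cover)
  also have "\<dots> = (\<Union>i\<in>?I. let xi = s i \<otimes>\<^bsub>G\<^esub> x \<otimes>\<^bsub>G\<^esub> inv\<^bsub>G\<^esub> (\<phi> (s i)) in
      twisted_class (G\<lparr>carrier := H\<rparr>) (\<lambda>z. xi \<otimes>\<^bsub>G\<^esub> \<phi> z \<otimes>\<^bsub>G\<^esub> inv\<^bsub>G\<^esub> xi) \<one>\<^bsub>G\<^esub>
        #>\<^bsub>G\<^esub> xi)"
    using twisted_class_coset_eq[OF \<phi>_hom _ _ assms(8)] \<phi>_H assms(5)
    by (simp add: Let_def)
  finally show ?thesis .
qed

end
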